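(* Let $\alpha,\beta,\gamma\in\mathbb{R}$, and let $G_3$ be the connected, simply connected Lie group whose Lie algebra $\mathfrak{g}_3$ has a basis $\{e_1,e_2,e_3\}$ with $[e_1,e_2]=-\gamma e_3$, $[e_1,e_3]=-\beta e_2$, $[e_2,e_3]=\alpha e_1$, equipped with the left-invariant Lorentzian metric $g$ for which $\{e_1,e_2,e_3\}$ is pseudo-orthonormal with $e_3$ timelike, and with the product structure $J$. Let $\lambda_0,c\in\mathbb{R}$. Then there exists a derivation $D$ of $\mathfrak{g}_3$ with $\widetilde{\mathrm{Ric}}^1=(s^1\lambda_0+c)\mathrm{Id}+D$ (i.e. $(G_3,g,J)$ is an algebraic Schouten soliton associated to the Kobayashi–Nomizu connection $\nabla^1$) if and only if one of the following holds: (i) $\alpha=\beta=\gamma=0$ and $c\neq0$; (ii) $\alpha=0$ and $c=-\beta\gamma+\beta\gamma\lambda_0$; (iii) $\beta=0$ and $c=-\alpha\gamma+\alpha\gamma\lambda_0$; (iv) $\alpha\beta\neq0$, $\gamma=0$ and $c=0$.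
   Context: Pseudo-orthonormal means $g(e_1,e_1)=g(e_2,e_2)=1$, $g(e_3,e_3)=-1$, $g(e_i,e_j)=0$ for $i\neq j$; left-invariant tensors are identified with their values on $\mathfrak{g}$. $\nabla$ is the Levi-Civita connection of $g$. The product structure $J$ is the left-invariant endomorphism with $Je_1=e_1$, $Je_2=e_2$, $Je_3=-e_3$. The canonical connection is $\nabla^0_XY=\nabla_XY-\frac12(\nabla_XJ)JY$, and the Kobayashi–Nomizu connection is $\nabla^1_XY=\nabla^0_XY-\frac14[(\nabla_YJ)JX-(\nabla_{JY}J)X]$. For $k=0,1$: $R^k(X,Y)Z=\nabla^k_X\nabla^k_YZ-\nabla^k_Y\nabla^k_XZ-\nabla^k_{[X,Y]}Z$; $\rho^k(X,Y)=-g(R^k(X,e_1)Y,e_1)-g(R^k(X,e_2)Y,e_2)+g(R^k(X,e_3)Y,e_3)$; $\widetilde\rho^k(X,Y)=\frac12(\rho^k(X,Y)+\rho^k(Y,X))$; $\widetilde{\mathrm{Ric}}^k$ is defined by $\widetilde\rho^k(X,Y)=g(\widetilde{\mathrm{Ric}}^k(X),Y)$; and $s^k=\widetilde\rho^k(e_1,e_1)+\widetilde\rho^k(e_2,e_2)-\widetilde\rho^k(e_3,e_3)$. A derivation of $\mathfrak{g}$ is a linear map $D$ with $D[X,Y]=[DX,Y]+[X,DY]$. $(G,g,J)$ is an algebraic Schouten soliton associated to $\nabla^k$ (with real constants $\lambda_0,c$) if $\widetilde{\mathrm{Ric}}^k=(s^k\lambda_0+c)\mathrm{Id}+D$ for some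 derivation $D$. *)

theory Defs
  imports "HOL-Analysis.Analysis"
begin

text \<open>The Lie algebra g3 is modelled as real^3 with coordinates w.r.t. the basis e1,e2,e3.\<close>

type_synonym vec3 = "real^3"

definition e1 :: vec3 where "e1 = axis 1 1"
definition e2 :: vec3 where "e2 = axis 2 1"
definition e3 :: vec3 where "e3 = axis 3 1"

text \<open>Lie bracket: [e1,e2] = -ga e3, [e1,e3] = -be e2, [e2,e3] = al e1, extended bilinearly.\<close>
definition brk :: "real \<Rightarrow> real \<Rightarrow> real \<Rightarrow> vec3 \<Rightarrow> vec3 \<Rightarrow> vec3" where
  "brk al be ga X Y = vector
     [ al * (X$2 * Y$3 - X$3 * Y$2),
       - be * (X$1 * Y$3 - X$3 * Y$1),
       - ga * (X$1 * Y$2 - X$2 * Y$1) ]"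

definition gL :: "vec3 \<Rightarrow> vec3 \<Rightarrow> real" where
  "gL X Y = X$1 * Y$1 + X$2 * Y$2 - X$3 * Y$3"

definition Jp :: "vec3 \<Rightarrow> vec3" where
  "Jp X = vector [X$1, X$2, - X$3]"

text \<open>Levi-Civita connection of the left-invariant metric (Koszul formula).\<close>
definition LC :: "real \<Rightarrow> real \<Rightarrow> real \<Rightarrow> vec3 \<Rightarrow> vec3 \<Rightarrow> vec3" where
  "LC al be ga X Y = (THE Z. \<forall>W. 2 * gL Z W =
       gL (brk al be ga X Y) W - gL (brk al be ga Y W) X + gL (brk al be ga W X) Y)"

definition nablaJ :: "real \<Rightarrow> real \<Rightarrow> real \<Rightarrow> vec3 \<Rightarrow> vec3 \<Rightarrow> vec3" where
  "nablaJ al be ga X Y = LC al be ga X (Jp Y) - Jp (LC al be ga X Y)"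

definition nabla0 :: "real \<Rightarrow> real \<Rightarrow> real \<Rightarrow> vec3 \<Rightarrow> vec3 \<Rightarrow> vec3" where
  "nabla0 al be ga X Y = LC al be ga X Y - (1/2) *\<^sub>R nablaJ al be ga X (Jp Y)"

definition nabla1 :: "real \<Rightarrow> real \<Rightarrow> real \<Rightarrow> vec3 \<Rightarrow> vec3 \<Rightarrow> vec3" where
  "nabla1 al be ga X Y = nabla0 al be ga X Y
      - (1/4) *\<^sub>R (nablaJ al be ga Y (Jp X) - nablaJ al be ga (Jp Y) X)"

definition curv :: "(vec3 \<Rightarrow> vec3 \<Rightarrow> vec3) \<Rightarrow> (vec3 \<Rightarrow> vec3 \<Rightarrow> vec3)
    \<Rightarrow> vec3 \<Rightarrow> vec3 \<Rightarrow> vec3 \<Rightarrow> vec3" where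
  "curv br nab X Y Z = nab X (nab Y Z) - nab Y (nab X Z) - nab (br X Y) Z"

definition ricci :: "(vec3 \<Rightarrow> vec3 \<Rightarrow> vec3) \<Rightarrow> (vec3 \<Rightarrow> vec3 \<Rightarrow> vec3)
    \<Rightarrow> vec3 \<Rightarrow> vec3 \<Rightarrow> real" where
  "ricci br nab X Y = - gL (curv br nab X e1 Y) e1 - gL (curv br nab X e2 Y) e2
                      + gL (curv br nab X e3 Y) e3"

definition sricci :: "(vec3 \<Rightarrow> vec3 \<Rightarrow> vec3) \<Rightarrow> (vec3 \<Rightarrow> vec3 \<Rightarrow> vec3)
    \<Rightarrow> vec3 \<Rightarrow> vec3 \<Rightarrow> real" where
  "sricci br nab X Y = (ricci br nab X Y + ricci br nab Y X) / 2"

definition RicOp :: "(vec3 \<Rightarrow> vec3 \<Rightarrow> vec3) \<Rightarrow> (vec3 \<Rightarrow> vec3 \<Rightarrow> vec3) \<Rightarrow> vec3 \<Rightarrow> vec3" where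
  "RicOp br nab X = (THE Z. \<forall>Y. gL Z Y = sricci br nab X Y)"

definition scal :: "(vec3 \<Rightarrow> vec3 \<Rightarrow> vec3) \<Rightarrow> (vec3 \<Rightarrow> vec3 \<Rightarrow> vec3) \<Rightarrow> real" where
  "scal br nab = sricci br nab e1 e1 + sricci br nab e2 e2 - sricci br nab e3 e3"

definition is_derivation :: "(vec3 \<Rightarrow> vec3 \<Rightarrow> vec3) \<Rightarrow> (vec3 \<Rightarrow> vec3) \<Rightarrow> bool" where
  "is_derivation br D \<longleftrightarrow> linear D \<and> (\<forall>X Y. D (br X Y) = br (D X) Y + br X (D Y))"

definition schouten_soliton :: "(vec3 \<Rightarrow> vec3 \<Rightarrow> vec3) \<Rightarrow> (vec3 \<Rightarrow> vec3 \<Rightarrow> vec3)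
    \<Rightarrow> real \<Rightarrow> real \<Rightarrow> bool" where
  "schouten_soliton br nab lam0 c \<longleftrightarrow>
     (\<exists>D. is_derivation br D \<and>
          (\<forall>X. RicOp br nab X = (scal br nab * lam0 + c) *\<^sub>R X + D X))"

end

theory Submission
  imports Defs
begin

text \<open>The Koszul formula gives the Levi-Civita connection explicitly, and the
  Kobayashi-Nomizu connection collapses to
  \<open>\<nabla>\<^sup>1\<^sub>X Y = X\<^sub>3 (- \<alpha> Y\<^sub>2 e\<^sub>1 + \<beta> Y\<^sub>1 e\<^sub>2)\<close>.
  Its symmetrized Ricci operator is \<open>diag(-\<beta>\<gamma>, -\<alpha>\<gamma>, 0)\<close>, so the only candidate for
  \<open>D\<close> is the diagonal map \<open>Ric - (s\<^sup>1 \<lambda>\<^sub>0 + c) Id\<close>. A diagonal map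
  \<open>diag(d\<^sub>1, d\<^sub>2, d\<^sub>3)\<close> is a derivation exactly when \<open>\<gamma>(d\<^sub>1 + d\<^sub>2 - d\<^sub>3) = 0\<close>,
  \<open>\<beta>(d\<^sub>1 + d\<^sub>3 - d\<^sub>2) = 0\<close> and \<open>\<alpha>(d\<^sub>2 + d\<^sub>3 - d\<^sub>1) = 0\<close>; solving these three
  equations gives the four cases.\<close>

lemma gL_left_cancel:
  assumes "\<forall>W. gL Z W = gL Z' W"
  shows "Z = Z'"
  using spec[OF assms, of e1] spec[OF assms, of e2] spec[OF assms, of e3]
  by (simp add: vec_eq_iff forall_3 gL_def e1_def e2_def e3_def axis_def)

lemma LC_eqI:
  assumes "\<forall>W. 2 * gL Z W =
    gL (brk al be ga X Y) W - gL (brk al be ga Y W) X + gL (brk al be ga W X) Y"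
  shows "LC al be ga X Y = Z"
  unfolding LC_def
proof (rule the_equality)
  fix Z' assume Z': "\<forall>W. 2 * gL Z' W =
    gL (brk al be ga X Y) W - gL (brk al be ga Y W) X + gL (brk al be ga W X) Y"
  have "gL Z' W = gL Z W" for W
    using spec[OF Z', of W] spec[OF assms, of W] by linarith
  then show "Z' = Z" by (simp add: gL_left_cancel)
qed (fact assms)

lemma RicOp_eqI:
  assumes "\<forall>Y. gL Z Y = sricci br nab X Y"
  shows "RicOp br nab X = Z"
  unfolding RicOp_def
proof (rule the_equality)
  fix Z' assume "\<forall>Y. gL Z' Y = sricci br nab X Y"
  with assms have "\<forall>Y. gL Z' Y = gL Z Y" by simp
  then show "Z' = Z" by (rule gL_left_cancel)
qed (fact assms)

lemma LC_eq:
  "LC al be ga X Y = vector [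
     ((al - be + ga) * X$2 * Y$3 + (- al - be + ga) * X$3 * Y$2) / 2,
     ((al - be - ga) * X$1 * Y$3 + (al + be - ga) * X$3 * Y$1) / 2,
     ((al - be - ga) * X$1 * Y$2 + (al - be + ga) * X$2 * Y$1) / 2]"
  by (rule LC_eqI) (simp add: gL_def brk_def field_simps)

lemma nablaJ_eq:
  "nablaJ al be ga X Y = vector [
     (be - al - ga) * X$2 * Y$3,
     (be - al + ga) * X$1 * Y$3,
     (al - be - ga) * X$1 * Y$2 + (al - be + ga) * X$2 * Y$1]"
  by (simp add: nablaJ_def LC_eq Jp_def vec_eq_iff forall_3 field_simps)

lemma nabla1_eq: "nabla1 al be ga X Y = vector [- al * X$3 * Y$2, be * X$3 * Y$1, 0]"
  by (simp add: nabla1_def nabla0_def nablaJ_eq LC_eq Jp_def vec_eq_iff forall_3 field_simps)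

lemma sricci_nabla1:
  "sricci (brk al be ga) (nabla1 al be ga) X Y = - be * ga * X$1 * Y$1 - al * ga * X$2 * Y$2"
  by (simp add: sricci_def ricci_def curv_def nabla1_eq brk_def gL_def e1_def e2_def e3_def
      axis_def field_simps)

definition diag3 :: "real \<Rightarrow> real \<Rightarrow> real \<Rightarrow> vec3 \<Rightarrow> vec3" where
  "diag3 d1 d2 d3 X = vector [d1 * X$1, d2 * X$2, d3 * X$3]"

lemma linear_diag3: "linear (diag3 d1 d2 d3)"
  by (rule linearI) (simp_all add: diag3_def vec_eq_iff forall_3 algebra_simps)

lemma RicOp_nabla1: "RicOp (brk al be ga) (nabla1 al be ga) = diag3 (- be * ga) (- al * ga) 0"
  by (rule ext, rule RicOp_eqI) (simp add: sricci_nabla1 diag3_def gL_def)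

lemma scal_nabla1: "scal (brk al be ga) (nabla1 al be ga) = - be * ga - al * ga"
  by (simp add: scal_def sricci_nabla1 e1_def e2_def e3_def axis_def)

lemma schouten_soliton_iff_is_derivation:
  "schouten_soliton br nab lam0 c \<longleftrightarrow>
     is_derivation br (\<lambda>X. RicOp br nab X - (scal br nab * lam0 + c) *\<^sub>R X)"
proof -
  have "RicOp br nab X = k *\<^sub>R X + D X \<longleftrightarrow> D X = RicOp br nab X - k *\<^sub>R X" for D X k
    by (auto simp: algebra_simps)
  then show ?thesis
    unfolding schouten_soliton_def by (auto simp: fun_eq_iff[symmetric])
qed

lemma is_derivation_diag3_iff:
  "is_derivation (brk al be ga) (diag3 d1 d2 d3) \<longleftrightarrow>
    ga * (d1 + d2 - d3) = 0 \<and> be * (d1 + d3 - d2) = 0 \<and> al * (d2 + d3 - d1) = 0"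
    (is "?der \<longleftrightarrow> ?eqs")
proof
  assume ?der
  then have Leibniz: "diag3 d1 d2 d3 (brk al be ga X Y) =
      brk al be ga (diag3 d1 d2 d3 X) Y + brk al be ga X (diag3 d1 d2 d3 Y)" for X Y
    by (simp add: is_derivation_def)
  show ?eqs
    using arg_cong[OF Leibniz[of e1 e2], of "\<lambda>v. v$3"]
      arg_cong[OF Leibniz[of e1 e3], of "\<lambda>v. v$2"]
      arg_cong[OF Leibniz[of e2 e3], of "\<lambda>v. v$1"]
    by (simp_all add: diag3_def brk_def e1_def e2_def e3_def axis_def algebra_simps)
next
  assume ?eqs
  then have "al * d1 = al * (d2 + d3)" "be * d2 = be * (d1 + d3)" "ga * d3 = ga * (d1 + d2)"
    by (simp_all add: algebra_simps)
  then have "diag3 d1 d2 d3 (brk al be ga X Y) =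
      brk al be ga (diag3 d1 d2 d3 X) Y + brk al be ga X (diag3 d1 d2 d3 Y)" for X Y
    unfolding vec_eq_iff forall_3 diag3_def brk_def by (simp add: algebra_simps) algebra
  then show ?der
    by (simp add: is_derivation_def linear_diag3)
qed

lemma soliton_equations_iff:
  fixes al be ga lam0 c k :: real
  assumes "k = (- be * ga - al * ga) * lam0 + c"
  shows "ga * (be * ga + al * ga + k) = 0 \<and> be * (be * ga - al * ga + k) = 0 \<and>
      al * (al * ga - be * ga + k) = 0 \<longleftrightarrow>
    (al = 0 \<and> be = 0 \<and> ga = 0 \<and> c \<noteq> 0) \<or>
    (al = 0 \<and> c = - be * ga + be * ga * lam0) \<or>
    (be = 0 \<and> c = - al * ga + al * ga * lam0) \<or>
    (al * be \<noteq> 0 \<and> ga = 0 \<and> c = 0)"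
proof -
  have c: "c = k + be * ga * lam0 + al * ga * lam0"
    using assms by (simp add: algebra_simps)
  show ?thesis
  proof (cases "al = 0 \<or> be = 0 \<or> ga = 0")
    case True
    then show ?thesis
      by (cases "al = 0"; cases "be = 0"; cases "ga = 0") (auto simp: mult_eq_0_iff c)
  next
    case False
    then have "al * ga \<noteq> 0" by simp
    from False show ?thesis
      unfolding c by (simp add: mult_eq_0_iff) (use \<open>al * ga \<noteq> 0\<close> in linarith)
  qed
qed

theorem theorem4p7:
  fixes al be ga lam0 c :: real
  shows "schouten_soliton (brk al be ga) (nabla1 al be ga) lam0 c \<longleftrightarrow>
    ((al = 0 \<and> be = 0 \<and> ga = 0 \<and> c \<noteq> 0) \<or>
     (al = 0 \<and> c = - be * ga + be * ga * lam0) \<or>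
     (be = 0 \<and> c = - al * ga + al * ga * lam0) \<or>
     (al * be \<noteq> 0 \<and> ga = 0 \<and> c = 0))" (is "_ \<longleftrightarrow> ?rhs")
proof -
  define k where "k = scal (brk al be ga) (nabla1 al be ga) * lam0 + c"
  have "(\<lambda>X. RicOp (brk al be ga) (nabla1 al be ga) X - k *\<^sub>R X) =
      diag3 (- be * ga - k) (- al * ga - k) (- k)"
    by (simp add: RicOp_nabla1 diag3_def fun_eq_iff vec_eq_iff forall_3 algebra_simps)
  then have "schouten_soliton (brk al be ga) (nabla1 al be ga) lam0 c \<longleftrightarrow>
      is_derivation (brk al be ga) (diag3 (- be * ga - k) (- al * ga - k) (- k))"
    unfolding schouten_soliton_iff_is_derivation k_def by simp
  also have "\<dots> \<longleftrightarrow> ga * (be * ga + al * ga + k) = 0 \<and> be * (be * ga - al * ga + k) = 0 \<and>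
      al * (al * ga - be * ga + k) = 0"
    unfolding is_derivation_diag3_iff by (simp add: mult_eq_0_iff) argo
  also have "\<dots> \<longleftrightarrow> ?rhs"
    by (rule soliton_equations_iff) (simp add: k_def scal_nabla1)
  finally show ?thesis .
qed

end
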